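(* Let $k$ be an algebraically closed field of characteristic zero, $A=k[x,y]$, $\mathfrak m=(x,y)$. The isomorphism classes of indecomposable $A$-modules $M$ of length $4$ supported at $\mathfrak m$ with $\mathfrak m M\cong k\oplus k$ (where $k=A/\mathfrak m$) form a family $\mathcal F_2$ isomorphic to $\mathbb P^1$. *)

theory Defs
  imports "HOL-Analysis.Analysis" "HOL-Computational_Algebra.Polynomial"
begin

text \<open>A finite-dimensional module M over A = k[x,y] is a k-vector space k^4 (length 4,
  since A/m = k) together with the commuting operators X, Y by which x and y act.\<close>

type_synonym 'k mat4 = "'k^4^4"

definition mpow :: "'k::field mat4 \<Rightarrow> nat \<Rightarrow> 'k mat4" where
  "mpow A n = ((\<lambda>B. A ** B) ^^ n) (mat 1)"

definition is_Amodule :: "'k::field mat4 \<Rightarrow> 'k mat4 \<Rightarrow> bool" where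
  "is_Amodule X Y \<longleftrightarrow> X ** Y = Y ** X"

text \<open>Supported at m = (x,y): some power m^n annihilates M, i.e. all monomials of degree n act by 0.\<close>
definition supported_at_m :: "'k::field mat4 \<Rightarrow> 'k mat4 \<Rightarrow> bool" where
  "supported_at_m X Y \<longleftrightarrow> (\<exists>n. \<forall>i\<le>n. mpow X i ** mpow Y (n - i) = 0)"

definition submodule :: "'k::field mat4 \<Rightarrow> 'k mat4 \<Rightarrow> ('k^4) set \<Rightarrow> bool" where
  "submodule X Y U \<longleftrightarrow> vec.subspace U \<and> (\<forall>u\<in>U. X *v u \<in> U \<and> Y *v u \<in> U)"

definition indecomposable :: "'k::field mat4 \<Rightarrow> 'k mat4 \<Rightarrow> bool" where
  "indecomposable X Y \<longleftrightarrow>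
     \<not> (\<exists>U W. submodule X Y U \<and> submodule X Y W \<and> U \<noteq> {0} \<and> W \<noteq> {0}
          \<and> U \<inter> W = {0} \<and> {u + w | u w. u \<in> U \<and> w \<in> W} = UNIV)"

definition mM :: "'k::field mat4 \<Rightarrow> 'k mat4 \<Rightarrow> ('k^4) set" where
  "mM X Y = {X *v u + Y *v v | u v. True}"

text \<open>mM \<cong> k \<oplus> k as A-modules: mM is 2-dimensional and x, y act on it by zero.\<close>
definition mM_iso_kk :: "'k::field mat4 \<Rightarrow> 'k mat4 \<Rightarrow> bool" where
  "mM_iso_kk X Y \<longleftrightarrow> vec.dim (mM X Y) = 2 \<and> (\<forall>v\<in>mM X Y. X *v v = 0 \<and> Y *v v = 0)"

definition in_F2 :: "'k::field mat4 \<Rightarrow> 'k mat4 \<Rightarrow> bool" where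
  "in_F2 X Y \<longleftrightarrow> is_Amodule X Y \<and> supported_at_m X Y \<and> indecomposable X Y \<and> mM_iso_kk X Y"

definition mod_iso :: "'k::field mat4 \<times> 'k mat4 \<Rightarrow> 'k mat4 \<times> 'k mat4 \<Rightarrow> bool" where
  "mod_iso M N \<longleftrightarrow> (\<exists>P. invertible P \<and> P ** fst M = fst N ** P \<and> P ** snd M = snd N ** P)"

definition poly2 :: "'k::comm_ring_1 poly poly \<Rightarrow> 'k \<Rightarrow> 'k \<Rightarrow> 'k" where
  "poly2 p s t = poly (poly p [:t:]) s"

definition eval_family :: "'k::field poly poly^4^4 \<Rightarrow> 'k poly poly^4^4 \<Rightarrow> 'k \<Rightarrow> 'k \<Rightarrow> 'k mat4 \<times> 'k mat4" where
  "eval_family PX PY s t = ((\<chi> i j. poly2 (PX $ i $ j) s t), (\<chi> i j. poly2 (PY $ i $ j) s t))"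

end

theory Submission
  imports Defs
begin

text \<open>
  Since x and y kill mM and map M into it, a basis of M ending with a basis of mM makes them act
  by block matrices (0 0; A 0) and (0 0; B 0). The module is then determined by the pencil of
  2x2 matrices (A, B) up to (A, B) \<mapsto> (G A H^-1, G B H^-1), and a splitting of the pencil by
  compatible idempotents decomposes M.

  For a non-split pencil the binary quadratic form det (a A + b B) is not identically zero,
  and over an algebraically closed field it has a root (s : t). Changing basis of the pencil to
  a singular member Z = s A + t B and a regular member W, non-splitting forces W^-1 Z to be a
  nonzero nilpotent, i.e. the pencil is (Jordan block, identity), so (s : t) is the only
  invariant. The explicit family below realises every point of P^1, and since 2 \<noteq> 0 the point
  is recovered from the module as the unique member of the pencil acting with rank one.
\<close>

section \<open>Pencils of 2x2 matrices\<close>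

definition mat2 :: "'a::zero \<Rightarrow> 'a \<Rightarrow> 'a \<Rightarrow> 'a \<Rightarrow> 'a^2^2" where
  "mat2 a b c d = (\<chi> i j. if i = 1 then (if j = 1 then a else b) else (if j = 1 then c else d))"

lemma mat2_nth [simp]:
  "mat2 a b c d $ 1 $ 1 = a" "mat2 a b c d $ 1 $ 2 = b" "mat2 a b c d $ 2 $ 1 = c" "mat2 a b c d $ 2 $ 2 = d"
  by (simp_all add: mat2_def)

lemma mat2_cases: obtains a b c d where "A = mat2 a b c d"
proof
  show "A = mat2 (A$1$1) (A$1$2) (A$2$1) (A$2$2)"
    by (simp add: vec_eq_iff forall_2)
qed

lemma mat2_eq_iff [simp]: "mat2 a b c d = mat2 a' b' c' d' \<longleftrightarrow> a = a' \<and> b = b' \<and> c = c' \<and> d = d'"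
  by (auto simp: vec_eq_iff forall_2 mat2_def)

lemma mat2_mult [simp]:
  "mat2 a b c d ** mat2 e f g h = mat2 (a*e + b*g) (a*f + b*h) (c*e + d*g) (c*f + d*h)"
  for a :: "'a::semiring_1"
  by (simp add: vec_eq_iff forall_2 mat2_def matrix_matrix_mult_def sum_2)

lemma mat2_one: "(mat 1 :: 'a::zero_neq_one^2^2) = mat2 1 0 0 1"
  by (simp add: vec_eq_iff forall_2 mat2_def mat_def)

lemma mat2_zero: "(0 :: 'a::zero^2^2) = mat2 0 0 0 0"
  by (simp add: vec_eq_iff forall_2 mat2_def)

lemma mat2_vector_mult [simp]: "mat2 a b c d *v vector [u, v] = vector [a * u + b * v, c * u + d * v]"
  for a :: "'a::semiring_1"
  by (simp add: vec_eq_iff forall_2 mat2_def matrix_vector_mult_def sum_2)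

lemma transpose_mat2 [simp]: "transpose (mat2 a b c d) = mat2 a c b d"
  by (simp add: vec_eq_iff forall_2 mat2_def transpose_def)

lemma det_mat2 [simp]: "det (mat2 a b c d) = a * d - b * c"
  by (simp add: det_2)

lemma trace_mat2 [simp]: "trace (mat2 a b c d) = a + d"
  by (simp add: trace_def sum_2)

definition det_polar :: "'a::comm_ring_1^'n^'n \<Rightarrow> 'a^'n^'n \<Rightarrow> 'a" where
  "det_polar A B = det (A + B) - det A - det B"

lemma det_polar_mat2 [simp]: "det_polar (mat2 a b c d) (mat2 e f g h) = a*h + d*e - b*g - c*f"
  by (simp add: det_polar_def mat2_def det_2 algebra_simps)

lemma det_polar_mult_right: "det_polar W (W ** N) = det W * trace N" for W :: "'a::comm_ring_1^2^2"
  by (cases W rule: mat2_cases, cases N rule: mat2_cases) (simp add: algebra_simps)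

definition pencil_comb :: "'a::comm_ring_1 \<Rightarrow> 'a \<Rightarrow> 'a^'n^'m \<Rightarrow> 'a^'n^'m \<Rightarrow> 'a^'n^'m" where
  "pencil_comb a b A B = mat a ** A + mat b ** B"

lemma mat_matrix_mult_nth [simp]: "(mat a ** A) $ i $ j = a * A $ i $ j"
  by (simp add: matrix_matrix_mult_def mat_def if_distrib if_distribR sum.delta' cong: if_cong)

lemma pencil_comb_nth [simp]: "pencil_comb a b A B $ i $ j = a * A $ i $ j + b * B $ i $ j"
  by (simp add: pencil_comb_def)

lemma pencil_comb_mat2 [simp]:
  "pencil_comb x y (mat2 a b c d) (mat2 e f g h) = mat2 (x*a + y*e) (x*b + y*f) (x*c + y*g) (x*d + y*h)"
  by (simp add: vec_eq_iff forall_2)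

lemma pencil_comb_pencil_comb:
  "pencil_comb a b (pencil_comb s t A B) (pencil_comb p r A B) = pencil_comb (a * s + b * p) (a * t + b * r) A B"
  by (simp add: vec_eq_iff algebra_simps)

lemma pencil_comb_inverse:
  assumes "s * r - t * p = 1"
  shows "pencil_comb r (-t) (pencil_comb s t A B) (pencil_comb p r A B) = A"
    and "pencil_comb (-p) s (pencil_comb s t A B) (pencil_comb p r A B) = B"
  using assms by (simp_all add: pencil_comb_pencil_comb vec_eq_iff algebra_simps)

lemma mat_mult_comm: "G ** mat a = mat a ** (G :: 'a::comm_semiring_1^'n^'m)"
  by (simp add: vec_eq_iff matrix_matrix_mult_def mat_def if_distrib if_distribR sum.delta' mult.commute
      cong: if_cong)

lemma matrix_mul_zero [simp]: "A ** 0 = 0" "0 ** A = (0 :: 'a::semiring_1^_^_)"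
  by (simp_all add: matrix_matrix_mult_def vec_eq_iff)

lemma matrix_add_rdistrib: "(A + B) ** C = A ** C + B ** (C :: 'a::semiring_1^_^_)"
  by (simp add: matrix_matrix_mult_def vec_eq_iff sum.distrib[symmetric] algebra_simps)

lemma pencil_comb_intertwine:
  fixes A B A' B' :: "'a::comm_ring_1^_^_"
  assumes "G ** A = A' ** H" "G ** B = B' ** H"
  shows "G ** pencil_comb a b A B = pencil_comb a b A' B' ** H"
  using assms
  by (simp add: pencil_comb_def matrix_add_ldistrib matrix_add_rdistrib matrix_mul_assoc mat_mult_comm)
     (simp flip: matrix_mul_assoc)

lemma det_pencil_comb:
  "det (pencil_comb x y A B) = x^2 * det A + x * y * det_polar A B + y^2 * det B"
  for A :: "'a::comm_ring_1^2^2"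
  by (cases A rule: mat2_cases, cases B rule: mat2_cases) (simp add: algebra_simps power2_eq_square)

lemma rank_one_factorization:
  fixes Z :: "'k::field^2^2"
  assumes "det Z = 0"
  obtains x1 x2 y1 y2 where "Z = mat2 (x1 * y1) (x1 * y2) (x2 * y1) (x2 * y2)"
proof -
  obtain a b c d where Z: "Z = mat2 a b c d" by (rule mat2_cases)
  have ad: "a * d = b * c" using assms Z by simp
  show thesis
  proof (cases "a = 0 \<and> c = 0")
    case True
    then show thesis by (intro that[of b 0 1 d]) (simp add: Z)
  next
    case False
    define l where "l = (if a \<noteq> 0 then b / a else d / c)"
    have "b = l * a \<and> d = l * c"
      using False ad by (auto simp: l_def field_simps)
    then show thesis using that[of a 1 l c] Z by (simp add: mult.commute)
  qed
qed

definition nilpotent_jordan :: "'a::zero_neq_one^2^2" where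
  "nilpotent_jordan = mat2 0 1 0 0"

lemma similar_nilpotent_jordan:
  fixes N :: "'k::field^2^2"
  assumes "det N = 0" "trace N = 0" "N \<noteq> 0"
  obtains T where "invertible T" "N ** T = T ** nilpotent_jordan"
proof -
  obtain a b c d where N: "N = mat2 a b c d" by (rule mat2_cases)
  have "a * d = b * c" "d = - a" using assms(1,2) N by (simp_all add: add_eq_0_iff)
  then have "b * c = - (a * a)" by simp
  show thesis
  proof (cases "c = 0")
    case False
    show thesis
      by (rule that[of "mat2 a 1 c 0"]) (use False \<open>d = - a\<close> \<open>b * c = - (a * a)\<close> in
          \<open>auto simp: N nilpotent_jordan_def invertible_det_nz algebra_simps power2_eq_square\<close>)
  next
    case True
    with \<open>a * d = b * c\<close> \<open>d = - a\<close> have "a = 0" "d = 0" by simp_all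
    with True assms(3) N have "b \<noteq> 0" by (auto simp: mat2_zero)
    show thesis
      by (rule that[of "mat2 b 0 0 1"]) (use True \<open>a = 0\<close> \<open>d = 0\<close> \<open>b \<noteq> 0\<close> in
          \<open>auto simp: N nilpotent_jordan_def invertible_det_nz\<close>)
  qed
qed

text \<open>The projection onto the line through (a1, a2) along the kernel of the functional (y1, y2).\<close>

definition rank_one_proj :: "'k::field \<Rightarrow> 'k \<Rightarrow> 'k \<Rightarrow> 'k \<Rightarrow> 'k^2^2" where
  "rank_one_proj a1 a2 y1 y2 =
     (let c = inverse (y1 * a1 + y2 * a2) in mat2 (c * a1 * y1) (c * a1 * y2) (c * a2 * y1) (c * a2 * y2))"

lemma rank_one_proj_nontrivial:
  assumes m: "y1 * a1 + y2 * a2 \<noteq> 0"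
  shows "rank_one_proj a1 a2 y1 y2 ** rank_one_proj a1 a2 y1 y2 = rank_one_proj a1 a2 y1 y2"
    and "rank_one_proj a1 a2 y1 y2 \<noteq> 0" and "rank_one_proj a1 a2 y1 y2 \<noteq> mat 1"
proof -
  define c where "c = inverse (y1 * a1 + y2 * a2)"
  have c: "c * (y1 * a1 + y2 * a2) = 1" "c \<noteq> 0" using m by (simp_all add: c_def)
  have "c * u * y1 * (c * a1 * v) + c * u * y2 * (c * a2 * v) = c * u * v * (c * (y1 * a1 + y2 * a2))"
    for u v by (simp add: algebra_simps)
  then show "rank_one_proj a1 a2 y1 y2 ** rank_one_proj a1 a2 y1 y2 = rank_one_proj a1 a2 y1 y2"
    by (simp add: rank_one_proj_def Let_def flip: c_def) (simp add: c)
  show "rank_one_proj a1 a2 y1 y2 \<noteq> 0"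
    using m c by (auto simp: rank_one_proj_def Let_def mat2_zero simp flip: c_def)
  show "rank_one_proj a1 a2 y1 y2 \<noteq> mat 1"
  proof
    assume "rank_one_proj a1 a2 y1 y2 = mat 1"
    then have "c * a1 * y1 = 1" "c * a1 * y2 = 0" "c * a2 * y2 = 1"
      by (simp_all add: rank_one_proj_def Let_def mat2_one flip: c_def)
    then show False using c by (auto simp: algebra_simps)
  qed
qed

section \<open>Splitting and normal form of pencils\<close>

text \<open>A pencil (A, B) of maps from a source copy of k^2 to a target copy splits if idempotents
  H1 on the source and H2 on the target, compatible with A and B, decompose it as a direct sum.\<close>

definition pencil_splits :: "'k::field^2^2 \<Rightarrow> 'k^2^2 \<Rightarrow> bool" where
  "pencil_splits A B \<longleftrightarrow> (\<exists>H1 H2. H1 ** H1 = H1 \<and> H2 ** H2 = H2 \<and> H2 ** A = A ** H1 \<and> H2 ** B = B ** H1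
     \<and> \<not> (H1 = 0 \<and> H2 = 0) \<and> \<not> (H1 = mat 1 \<and> H2 = mat 1))"

lemma pencil_splitsI:
  assumes "H1 ** H1 = H1" "H2 ** H2 = H2" "H2 ** A = A ** H1" "H2 ** B = B ** H1"
    "\<not> (H1 = 0 \<and> H2 = 0)" "\<not> (H1 = mat 1 \<and> H2 = mat 1)"
  shows "pencil_splits A B"
  using assms unfolding pencil_splits_def by blast

definition pencil_equiv :: "'k::field^2^2 \<Rightarrow> 'k^2^2 \<Rightarrow> 'k^2^2 \<Rightarrow> 'k^2^2 \<Rightarrow> bool" where
  "pencil_equiv A B A' B' \<longleftrightarrow>
     (\<exists>G H. invertible G \<and> invertible H \<and> G ** A = A' ** H \<and> G ** B = B' ** H)"

lemma pencil_equivI: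
  assumes "invertible G" "invertible H" "G ** A = A' ** H" "G ** B = B' ** H"
  shows "pencil_equiv A B A' B'"
  using assms unfolding pencil_equiv_def by blast

lemma pencil_splits_pencil_comb:
  assumes "pencil_splits A B"
  shows "pencil_splits (pencil_comb a b A B) (pencil_comb c d A B)"
proof -
  obtain H1 H2 where "H1 ** H1 = H1" "H2 ** H2 = H2" "H2 ** A = A ** H1" "H2 ** B = B ** H1"
    "\<not> (H1 = 0 \<and> H2 = 0)" "\<not> (H1 = mat 1 \<and> H2 = mat 1)"
    using assms unfolding pencil_splits_def by blast
  then show ?thesis
    by (intro pencil_splitsI[of H1 H2]) (auto intro: pencil_comb_intertwine)
qed

lemma pencil_splits_change_basis:
  assumes "s * r - t * p = 1" "pencil_splits (pencil_comb s t A B) (pencil_comb p r A B)"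
  shows "pencil_splits A B"
  using pencil_splits_pencil_comb[OF assms(2), of r "-t" "-p" s] by (simp only: pencil_comb_inverse[OF assms(1)])

lemma pencil_equiv_change_basis:
  assumes "s * r - t * p = 1" "pencil_equiv (pencil_comb s t A B) (pencil_comb p r A B) J K"
  shows "pencil_equiv A B (pencil_comb r (-t) J K) (pencil_comb (-p) s J K)"
proof -
  obtain G H where GH: "invertible G" "invertible H"
    "G ** pencil_comb s t A B = J ** H" "G ** pencil_comb p r A B = K ** H"
    using assms(2) unfolding pencil_equiv_def by blast
  show ?thesis
    unfolding pencil_equiv_def
    using GH pencil_comb_intertwine[OF GH(3,4)] pencil_comb_inverse[OF assms(1), of A B] by metis
qed

lemma pencil_splits_transpose:
  assumes "pencil_splits (transpose A) (transpose B)"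
  shows "pencil_splits A B"
proof -
  obtain H1 H2 where H: "H1 ** H1 = H1" "H2 ** H2 = H2" "H2 ** transpose A = transpose A ** H1"
    "H2 ** transpose B = transpose B ** H1" "\<not> (H1 = 0 \<and> H2 = 0)" "\<not> (H1 = mat 1 \<and> H2 = mat 1)"
    using assms unfolding pencil_splits_def by blast
  have "transpose M = 0 \<longleftrightarrow> M = 0" "transpose M = mat 1 \<longleftrightarrow> M = mat 1" for M :: "'a^2^2"
    using transpose_iff[of M "mat 0", unfolded transpose_mat, unfolded mat_0] transpose_iff[of M "mat 1"]
    by simp_all
  then have "\<not> (transpose H2 = 0 \<and> transpose H1 = 0)" "\<not> (transpose H2 = mat 1 \<and> transpose H1 = mat 1)"
    using H(5,6) by auto
  moreover have "transpose H1 ** transpose H1 = transpose H1" "transpose H2 ** transpose H2 = transpose H2"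
    using H(1,2) by (simp_all flip: matrix_transpose_mul)
  moreover have "transpose H1 ** A = A ** transpose H2" "transpose H1 ** B = B ** transpose H2"
    using arg_cong[OF H(3), of transpose] arg_cong[OF H(4), of transpose]
    by (simp_all add: matrix_transpose_mul)
  ultimately show ?thesis
    unfolding pencil_splits_def by blast
qed

lemma pencil_splits_if_common_kernel:
  fixes A B :: "'k::field^2^2"
  assumes "(k1, k2) \<noteq> (0, 0)" "A *v vector [k1, k2] = 0" "B *v vector [k1, k2] = 0"
  shows "pencil_splits A B"
proof -
  obtain y1 y2 where y: "y1 * k1 + y2 * k2 \<noteq> 0"
  proof (cases "k1 = 0")
    case True
    then show thesis using that[of 0 1] assms(1) by simp
  next
    case False
    then show thesis using that[of 1 0] by simp
  qed
  have "M ** rank_one_proj k1 k2 y1 y2 = 0" if "M *v vector [k1, k2] = 0" for M :: "'k^2^2"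
  proof -
    obtain a b c d where M: "M = mat2 a b c d" by (rule mat2_cases)
    with that have "a * k1 + b * k2 = 0" "c * k1 + d * k2 = 0"
      by (simp_all add: vec_eq_iff forall_2)
    moreover have "a * (e * k1 * y) + b * (e * k2 * y) = e * y * (a * k1 + b * k2)" for a b e y :: 'k
      by (simp add: algebra_simps)
    ultimately show ?thesis
      by (simp add: M rank_one_proj_def Let_def mat2_zero)
  qed
  then show ?thesis
    using rank_one_proj_nontrivial[OF y] assms(2,3)
    by (intro pencil_splitsI[of "rank_one_proj k1 k2 y1 y2" 0]) auto
qed

lemma exists_common_null_vector:
  fixes y1 y2 v1 v2 :: "'k::field"
  assumes "y1 * v2 = y2 * v1"
  obtains k1 k2 where "(k1, k2) \<noteq> (0, 0)" "y1 * k1 + y2 * k2 = 0" "v1 * k1 + v2 * k2 = 0"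
proof (cases "(y1, y2) = (0, 0)")
  case False
  then show thesis using assms by (intro that[of y2 "- y1"]) (auto simp: algebra_simps)
next
  case y: True
  show thesis
  proof (cases "(v1, v2) = (0, 0)")
    case False
    then show thesis using y by (intro that[of v2 "- v1"]) (auto simp: algebra_simps)
  next
    case True
    then show thesis using y by (intro that[of 1 0]) auto
  qed
qed

lemma pencil_splits_if_singular:
  fixes A B :: "'k::field^2^2"
  assumes "det A = 0" "det B = 0" "det_polar A B = 0"
  shows "pencil_splits A B"
proof -
  obtain x1 x2 y1 y2 where A: "A = mat2 (x1 * y1) (x1 * y2) (x2 * y1) (x2 * y2)"
    using rank_one_factorization[OF assms(1)] .
  obtain u1 u2 v1 v2 where B: "B = mat2 (u1 * v1) (u1 * v2) (u2 * v1) (u2 * v2)"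
    using rank_one_factorization[OF assms(2)] .
  have "det_polar A B = (x1 * u2 - x2 * u1) * (y1 * v2 - y2 * v1)"
    by (simp add: A B algebra_simps)
  then consider "y1 * v2 = y2 * v1" | "x1 * u2 = x2 * u1" using assms(3) by force
  then show ?thesis
  proof cases
    case 1
    obtain k1 k2 where "(k1, k2) \<noteq> (0, 0)" "y1 * k1 + y2 * k2 = 0" "v1 * k1 + v2 * k2 = 0"
      using exists_common_null_vector[OF 1] .
    moreover have "x * y1 * k1 + x * y2 * k2 = x * (y1 * k1 + y2 * k2)"
      "x * v1 * k1 + x * v2 * k2 = x * (v1 * k1 + v2 * k2)" for x
      by (simp_all add: algebra_simps)
    ultimately show ?thesis
      by (intro pencil_splits_if_common_kernel[of k1 k2]) (simp_all add: A B vec_eq_iff forall_2)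
  next
    case 2
    obtain k1 k2 where "(k1, k2) \<noteq> (0, 0)" "x1 * k1 + x2 * k2 = 0" "u1 * k1 + u2 * k2 = 0"
      using exists_common_null_vector[OF 2] .
    moreover have "x1 * y * k1 + x2 * y * k2 = y * (x1 * k1 + x2 * k2)"
      "u1 * y * k1 + u2 * y * k2 = y * (u1 * k1 + u2 * k2)" for y
      by (simp_all add: algebra_simps)
    ultimately have "pencil_splits (transpose A) (transpose B)"
      by (intro pencil_splits_if_common_kernel[of k1 k2]) (simp_all add: A B vec_eq_iff forall_2)
    then show ?thesis by (rule pencil_splits_transpose)
  qed
qed

lemma pencil_splits_if_polar_nonzero:
  fixes Z W :: "'k::field^2^2"
  assumes "det Z = 0" "det_polar W Z \<noteq> 0"
  shows "pencil_splits Z W"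
proof -
  obtain x1 x2 y1 y2 where Z: "Z = mat2 (x1 * y1) (x1 * y2) (x2 * y1) (x2 * y2)"
    using rank_one_factorization[OF assms(1)] .
  obtain w1 w2 w3 w4 where W: "W = mat2 w1 w2 w3 w4" by (rule mat2_cases)
  \<comment> \<open>(a1, a2) = adj W (x1, x2) and (b1, b2) = (y1, y2) adj W\<close>
  define a1 where "a1 = w4 * x1 - w2 * x2"
  define a2 where "a2 = w1 * x2 - w3 * x1"
  define b1 where "b1 = y1 * w4 - y2 * w3"
  define b2 where "b2 = y2 * w1 - y1 * w2"
  define m where "m = det_polar W Z"
  have m: "y1 * a1 + y2 * a2 = m" "b1 * x1 + b2 * x2 = m" "m \<noteq> 0"
    using assms(2) by (simp_all add: m_def a1_def a2_def b1_def b2_def Z W algebra_simps)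
  define H1 where "H1 = rank_one_proj a1 a2 y1 y2"
  define H2 where "H2 = rank_one_proj x1 x2 b1 b2"
  have "H2 ** Z = Z ** H1" "H2 ** W = W ** H1"
    unfolding H1_def H2_def rank_one_proj_def Let_def m(1,2)
    by (simp_all add: Z W a1_def a2_def b1_def b2_def algebra_simps)
  moreover have "H1 ** H1 = H1" "H1 \<noteq> 0" "H1 \<noteq> mat 1"
    unfolding H1_def by (rule rank_one_proj_nontrivial, simp add: m)+
  moreover have "H2 ** H2 = H2"
    unfolding H2_def by (rule rank_one_proj_nontrivial, simp add: m)
  ultimately show ?thesis
    by (intro pencil_splitsI[of H1 H2]) auto
qed

lemma pencil_splits_zero_member:
  fixes W :: "'k::field^2^2"
  assumes "invertible W"
  shows "pencil_splits 0 W"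
proof -
  obtain W' where W': "W ** W' = mat 1" "W' ** W = mat 1" using assms unfolding invertible_def by blast
  define H1 :: "'k^2^2" where "H1 = mat2 1 0 0 0"
  define H2 where "H2 = W ** H1 ** W'"
  have "H1 ** H1 = H1" "H1 \<noteq> 0" "H1 \<noteq> mat 1" by (simp_all add: H1_def mat2_zero mat2_one)
  moreover have "H2 ** H2 = H2"
  proof -
    have "H2 ** H2 = W ** H1 ** (W' ** W) ** H1 ** W'" by (simp only: H2_def matrix_mul_assoc)
    also have "\<dots> = W ** (H1 ** H1) ** W'" by (simp add: W' matrix_mul_assoc)
    finally show ?thesis by (simp add: \<open>H1 ** H1 = H1\<close> H2_def)
  qed
  moreover have "H2 ** W = W ** H1 ** (W' ** W)" by (simp only: H2_def matrix_mul_assoc)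
  then have "H2 ** W = W ** H1" by (simp add: W')
  ultimately show ?thesis
    by (intro pencil_splitsI[of H1 H2]) auto
qed

lemma pencil_equiv_nilpotent_jordan:
  fixes Z W :: "'k::field^2^2"
  assumes "det W \<noteq> 0" "det Z = 0" "det_polar W Z = 0" "Z \<noteq> 0"
  shows "pencil_equiv Z W nilpotent_jordan (mat 1)"
proof -
  obtain W' where W': "W ** W' = mat 1" "W' ** W = mat 1"
    using assms(1) unfolding invertible_det_nz[symmetric] invertible_def by blast
  define N where "N = W' ** Z"
  have Z: "Z = W ** N" by (simp add: N_def matrix_mul_assoc W')
  have "det N = 0" using assms(2) by (simp add: N_def det_mul)
  \<comment> \<open>det_polar W (W N) = det W * trace N, so N is nilpotent\<close>
  moreover have "trace N = 0" using assms(1,3) det_polar_mult_right[of W N] by (simp add: Z)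
  moreover have "N \<noteq> 0" using assms(4) Z by auto
  ultimately obtain T where T: "invertible T" "N ** T = T ** nilpotent_jordan"
    using similar_nilpotent_jordan by blast
  obtain T' where T': "T ** T' = mat 1" "T' ** T = mat 1" using T(1) unfolding invertible_def by blast
  have "T' ** N = nilpotent_jordan ** T'"
  proof -
    have "T' ** N = T' ** N ** (T ** T')" by (simp add: T')
    also have "\<dots> = T' ** (N ** T) ** T'" by (simp only: matrix_mul_assoc)
    also have "\<dots> = (T' ** T) ** nilpotent_jordan ** T'" by (simp add: T(2) matrix_mul_assoc)
    finally show ?thesis by (simp add: T')
  qed
  moreover have "invertible T'" "invertible W'" using T' W' unfolding invertible_def by blast+
  ultimately show ?thesis
    using invertible_mult
    by (intro pencil_equivI[of "T' ** W'" T']) (simp_all add: N_def W' flip: matrix_mul_assoc)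
qed

lemma exists_regular_member:
  fixes A B :: "'k::field^2^2"
  assumes "\<not> pencil_splits A B"
  obtains s t p r where "s * r - t * p = 1" "det (pencil_comb p r A B) \<noteq> 0"
proof -
  consider "det A \<noteq> 0" | "det B \<noteq> 0" | "det (pencil_comb 1 1 A B) \<noteq> 0"
    using assms pencil_splits_if_singular by (force simp: det_pencil_comb)
  then show thesis
  proof cases
    case 1
    then show thesis by (intro that[of 0 0 "-1" 1]) (simp_all add: det_pencil_comb)
  next
    case 2
    then show thesis by (intro that[of 1 1 0 0]) (simp_all add: det_pencil_comb)
  next
    case 3
    then show thesis by (intro that[of 1 1 0 1]) simp_all
  qed
qed

lemma quadratic_has_root:
  fixes c0 c1 c2 :: "'k::alg_closed_field"
  assumes "c2 \<noteq> 0"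
  obtains x where "c0 + c1 * x + c2 * x^2 = 0"
proof -
  obtain x where "poly [:c0, c1, c2:] x = 0"
    using alg_closed_imp_poly_has_root[of "[:c0, c1, c2:]"] assms by auto
  then show thesis by (intro that[of x]) (simp add: algebra_simps power2_eq_square)
qed

lemma pencil_normal_form:
  fixes A B :: "'k::alg_closed_field^2^2"
  assumes "\<not> pencil_splits A B"
  obtains s t p r where "s * r - t * p = 1"
    "pencil_equiv (pencil_comb s t A B) (pencil_comb p r A B) nilpotent_jordan (mat 1)"
proof -
  obtain s0 t0 p r where st0: "s0 * r - t0 * p = 1" and W: "det (pencil_comb p r A B) \<noteq> 0"
    by (rule exists_regular_member[OF assms])
  let ?W = "pencil_comb p r A B"
  obtain x where x: "det (pencil_comb s0 t0 A B) + det_polar (pencil_comb s0 t0 A B) ?W * x + det ?W * x^2 = 0"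
    using quadratic_has_root[OF W] .
  define s where "s = s0 + x * p"
  define t where "t = t0 + x * r"
  let ?Z = "pencil_comb s t A B"
  have Z: "det ?Z = 0"
    using x det_pencil_comb[of 1 x "pencil_comb s0 t0 A B" ?W]
    by (simp add: pencil_comb_pencil_comb s_def t_def mult.commute)
  have st: "s * r - t * p = 1" using st0 by (simp add: s_def t_def algebra_simps)
  then have split: "\<not> pencil_splits ?Z ?W" using assms pencil_splits_change_basis by blast
  then have "det_polar ?W ?Z = 0" using Z pencil_splits_if_polar_nonzero by blast
  moreover have "?Z \<noteq> 0"
    using split W pencil_splits_zero_member[of ?W] by (auto simp: invertible_det_nz)
  ultimately have "pencil_equiv ?Z ?W nilpotent_jordan (mat 1)"
    using W Z by (intro pencil_equiv_nilpotent_jordan)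
  then show thesis using st that by blast
qed

section \<open>Block matrices and idempotents\<close>

text \<open>k^4 is the sum of an upper copy of k^2 (coordinates 1, 2) and a lower copy (coordinates 3, 4);
  block_idx is the coordinate within the copy, and lower_block A is (0 0; A 0) in these blocks.\<close>

definition is_lower :: "4 \<Rightarrow> bool" where
  "is_lower i \<longleftrightarrow> i = 3 \<or> i = 4"

definition block_idx :: "4 \<Rightarrow> 2" where
  "block_idx i = (if i = 1 \<or> i = 3 then 1 else 2)"

lemma is_lower_simps [simp]: "\<not> is_lower 1" "\<not> is_lower 2" "is_lower 3" "is_lower 4"
  by (simp_all add: is_lower_def)

lemma block_idx_simps [simp]: "block_idx 1 = 1" "block_idx 2 = 2" "block_idx 3 = 1" "block_idx 4 = 2"
  by (simp_all add: block_idx_def)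

definition lower_block :: "'a::zero^2^2 \<Rightarrow> 'a^4^4" where
  "lower_block A = (\<chi> i j. if is_lower i \<and> \<not> is_lower j then A $ block_idx i $ block_idx j else 0)"

definition diag_block :: "'a::zero^2^2 \<Rightarrow> 'a^2^2 \<Rightarrow> 'a^4^4" where
  "diag_block H1 H2 =
     (\<chi> i j. if is_lower i = is_lower j then (if is_lower i then H2 else H1) $ block_idx i $ block_idx j else 0)"

lemmas block_entries = vec_eq_iff forall_4 forall_2 matrix_matrix_mult_def sum_4 sum_2
  lower_block_def diag_block_def mat_def

lemma lower_block_mult_lower_block [simp]: "lower_block A ** lower_block B = (0 :: 'a::semiring_1^4^4)"
  by (simp add: block_entries)

lemma diag_block_mult_lower_block: "diag_block H1 H2 ** lower_block A = lower_block (H2 ** A)"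
  for A :: "'a::semiring_1^2^2"
  by (simp add: block_entries)

lemma lower_block_mult_diag_block: "lower_block A ** diag_block H1 H2 = lower_block (A ** H1)"
  for A :: "'a::semiring_1^2^2"
  by (simp add: block_entries)

lemma diag_block_mult: "diag_block H1 H2 ** diag_block K1 K2 = diag_block (H1 ** K1) (H2 ** K2)"
  for H1 :: "'a::semiring_1^2^2"
  by (simp add: block_entries)

lemma diag_block_eq_iff: "diag_block H1 H2 = diag_block K1 K2 \<longleftrightarrow> H1 = K1 \<and> H2 = K2"
  by (auto simp: block_entries)

lemma diag_block_zero: "diag_block 0 0 = (0 :: 'a::zero^4^4)"
  by (simp add: block_entries)

lemma diag_block_one: "diag_block (mat 1) (mat 1) = (mat 1 :: 'a::zero_neq_one^4^4)"
  by (simp add: block_entries)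

lemma lower_block_pencil_comb:
  "lower_block (pencil_comb a b A B) = pencil_comb a b (lower_block A) (lower_block (B :: 'a::comm_ring_1^2^2))"
  by (simp add: vec_eq_iff forall_4 lower_block_def)

lemma lower_block_mult_vector:
  "lower_block A *v u = (\<chi> i. if i = 3 then A$1$1 * u$1 + A$1$2 * u$2
                             else if i = 4 then A$2$1 * u$1 + A$2$2 * u$2 else 0)"
  for A :: "'a::comm_ring_1^2^2"
  by (simp add: vec_eq_iff forall_4 matrix_vector_mult_def sum_4 lower_block_def)

definition nontrivial_idempotent :: "'k::field mat4 \<Rightarrow> 'k mat4 \<Rightarrow> 'k mat4 \<Rightarrow> bool" where
  "nontrivial_idempotent X Y E \<longleftrightarrow>
     E ** E = E \<and> E \<noteq> 0 \<and> E \<noteq> mat 1 \<and> E ** X = X ** E \<and> E ** Y = Y ** E"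

lemma submodule_range:
  assumes "E ** X = X ** E" "E ** Y = Y ** E"
  shows "submodule X Y (range ((*v) E))"
  unfolding submodule_def
proof (intro conjI ballI)
  show "vec.subspace (range ((*v) E))" by (rule vec.subspace_image) simp
  fix u assume "u \<in> range ((*v) E)"
  then obtain a where "u = E *v a" by blast
  then have "X *v u = E *v (X *v a)" "Y *v u = E *v (Y *v a)"
    using assms by (simp_all add: matrix_vector_mul_assoc)
  then show "X *v u \<in> range ((*v) E)" "Y *v u \<in> range ((*v) E)" by simp_all
qed

lemma submodule_kernel:
  assumes "E ** X = X ** E" "E ** Y = Y ** E"
  shows "submodule X Y {v. E *v v = 0}"
  unfolding submodule_def
proof (intro conjI ballI)
  show "vec.subspace {v. E *v v = 0}"
    by (rule vec.subspace_kernel)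
  fix u assume "u \<in> {v. E *v v = 0}"
  moreover have "E *v (X *v u) = X *v (E *v u)" "E *v (Y *v u) = Y *v (E *v u)"
    using assms by (simp_all add: matrix_vector_mul_assoc)
  ultimately show "X *v u \<in> {v. E *v v = 0}" "Y *v u \<in> {v. E *v v = 0}" by simp_all
qed

lemma decomposable_if_nontrivial_idempotent:
  assumes "nontrivial_idempotent X Y E"
  shows "\<not> indecomposable X Y"
proof -
  have E: "E ** E = E" "E \<noteq> 0" "E \<noteq> mat 1" "E ** X = X ** E" "E ** Y = Y ** E"
    using assms unfolding nontrivial_idempotent_def by blast+
  let ?U = "range ((*v) E)" and ?W = "{v. E *v v = 0}"
  have EE: "E *v (E *v v) = E *v v" for v
    using E(1) by (simp add: matrix_vector_mul_assoc)
  have complement: "E *v (v - E *v v) = 0" for v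
    by (simp add: matrix_vector_mult_diff_distrib EE)
  have "?U \<noteq> {0}"
  proof
    assume "?U = {0}"
    then have "E *v v = 0 *v v" for v by auto
    then show False using E(2) matrix_eq by blast
  qed
  moreover have "?W \<noteq> {0}"
  proof
    assume "?W = {0}"
    then have "v - E *v v = 0" for v using complement by blast
    then have "E *v v = mat 1 *v v" for v by simp
    then show False using E(3) matrix_eq by blast
  qed
  moreover have "?U \<inter> ?W = {0}"
  proof safe
    fix a assume "E *v (E *v a) = 0"
    then show "E *v a = 0" by (simp only: EE)
  next
    show "0 \<in> ?U" by (metis matrix_vector_mult_0_right rangeI)
  qed simp
  moreover have "{u + w | u w. u \<in> ?U \<and> w \<in> ?W} = UNIV"
  proof -
    have "v = E *v v + (v - E *v v)" for v by simp
    then show ?thesis using complement by blast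
  qed
  ultimately show ?thesis
    unfolding indecomposable_def using submodule_range[OF E(4,5)] submodule_kernel[OF E(4,5)] by blast
qed

lemma direct_sum_unique:
  fixes U W :: "('k::field^'n) set"
  assumes "vec.subspace U" "vec.subspace W" "U \<inter> W = {0}"
    and "u \<in> U" "u' \<in> U" "v - u \<in> W" "v - u' \<in> W"
  shows "u = u'"
proof -
  have "u - u' \<in> U" using vec.subspace_diff[OF assms(1,4,5)] .
  moreover have "(v - u') - (v - u) \<in> W" using vec.subspace_diff[OF assms(2,7,6)] .
  then have "u - u' \<in> W" by (simp add: algebra_simps)
  ultimately have "u - u' \<in> U \<inter> W" by blast
  then show ?thesis using assms(3) by simp
qed

lemma direct_sum_projection:
  fixes U W :: "('k::field^'n) set"
  assumes U: "vec.subspace U" and W: "vec.subspace W" and "U \<inter> W = {0}"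
    and sum: "{u + w | u w. u \<in> U \<and> w \<in> W} = UNIV"
  obtains E :: "'k^'n^'n" where "\<And>v. E *v v \<in> U" "\<And>v. v - E *v v \<in> W"
proof -
  have ex: "\<exists>u. u \<in> U \<and> v - u \<in> W" for v
  proof -
    from sum obtain u w where "u \<in> U" "w \<in> W" "v = u + w" by blast
    then show ?thesis by (intro exI[of _ u]) simp
  qed
  define f where "f v = (THE u. u \<in> U \<and> v - u \<in> W)" for v
  have "\<exists>!u. u \<in> U \<and> v - u \<in> W" for v
    using ex[of v] direct_sum_unique[OF assms(1-3)] by blast
  then have f: "f v \<in> U \<and> v - f v \<in> W" for v
    unfolding f_def by (rule theI')
  have f_eq: "f v = u" if "u \<in> U" "v - u \<in> W" for u v
    using direct_sum_unique[OF assms(1-3)] f that by blast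
  have "Vector_Spaces.linear (*s) (*s) f"
    unfolding Vector_Spaces.linear_iff
  proof (intro conjI allI vec.vector_space_axioms)
    fix x y :: "'k^'n" and c :: 'k
    have "f x + f y \<in> U" using f vec.subspace_add[OF U] by blast
    moreover have "x + y - (f x + f y) \<in> W"
      using vec.subspace_add[OF W conjunct2[OF f[of x]] conjunct2[OF f[of y]]] by (simp add: algebra_simps)
    ultimately show "f (x + y) = f x + f y" by (rule f_eq)
    have "c *s f x \<in> U" using f vec.subspace_scale[OF U] by blast
    moreover have "c *s x - c *s f x \<in> W"
      using vec.subspace_scale[OF W conjunct2[OF f[of x]], of c] by (simp add: vector_ssub_ldistrib)
    ultimately show "f (c *s x) = c *s f x" by (rule f_eq)
  qed
  then show thesis using f that[of "matrix f"] by (simp add: matrix_works)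
qed

lemma direct_sum_projection_commute:
  fixes U W :: "('k::field^'n) set"
  assumes "vec.subspace U" "vec.subspace W" "U \<inter> W = {0}"
    and E: "\<And>v. E *v v \<in> U" "\<And>v. v - E *v v \<in> W"
    and Z: "\<And>u. u \<in> U \<Longrightarrow> Z *v u \<in> U" "\<And>w. w \<in> W \<Longrightarrow> Z *v w \<in> W"
  shows "E ** Z = Z ** E"
proof -
  have "E *v (Z *v v) = Z *v (E *v v)" for v
  proof (rule direct_sum_unique[OF assms(1-3)])
    show "Z *v (E *v v) \<in> U" "E *v (Z *v v) \<in> U" using Z E by blast+
    show "Z *v v - E *v (Z *v v) \<in> W" using E by blast
    have "Z *v (v - E *v v) \<in> W" using Z E by blast
    then show "Z *v v - Z *v (E *v v) \<in> W" by (simp add: matrix_vector_mult_diff_distrib)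
  qed
  then show ?thesis by (simp add: matrix_eq matrix_vector_mul_assoc)
qed

lemma nontrivial_idempotent_if_decomposable:
  fixes X Y :: "'k::field mat4"
  assumes "\<not> indecomposable X Y"
  obtains E where "nontrivial_idempotent X Y E"
proof -
  obtain U W where sU: "submodule X Y U" and sW: "submodule X Y W" and U0: "U \<noteq> {0}"
    and W0: "W \<noteq> {0}" and UW: "U \<inter> W = {0}" and sum: "{u + w | u w. u \<in> U \<and> w \<in> W} = UNIV"
    using assms unfolding indecomposable_def by blast
  have U: "vec.subspace U" and W: "vec.subspace W" using sU sW by (auto simp: submodule_def)
  obtain E :: "'k mat4" where E: "\<And>v. E *v v \<in> U" "\<And>v. v - E *v v \<in> W"
    using direct_sum_projection[OF U W UW sum] by blast
  have E_eq: "E *v v = u" if "u \<in> U" "v - u \<in> W" for u v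
    using direct_sum_unique[OF U W UW] E that by blast
  have "E ** E = E"
  proof -
    have "E *v (E *v v) = E *v v" for v using E vec.subspace_0[OF W] by (intro E_eq) auto
    then show ?thesis by (simp add: matrix_eq matrix_vector_mul_assoc)
  qed
  moreover have "E \<noteq> 0"
  proof -
    obtain u where "u \<in> U" "u \<noteq> 0" using U0 vec.subspace_0[OF U] by blast
    moreover have "E *v u = u" using \<open>u \<in> U\<close> vec.subspace_0[OF W] by (intro E_eq) auto
    ultimately show ?thesis by auto
  qed
  moreover have "E \<noteq> mat 1"
  proof -
    obtain w where "w \<in> W" "w \<noteq> 0" using W0 vec.subspace_0[OF W] by blast
    moreover have "E *v w = 0" using \<open>w \<in> W\<close> vec.subspace_0[OF U] by (intro E_eq) auto
    ultimately show ?thesis by auto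
  qed
  moreover have "E ** X = X ** E" "E ** Y = Y ** E"
    using sU sW by (auto simp: submodule_def intro!: direct_sum_projection_commute[OF U W UW E])
  ultimately show thesis using that unfolding nontrivial_idempotent_def by blast
qed

lemma indecomposable_iff_no_nontrivial_idempotent:
  "indecomposable X Y \<longleftrightarrow> (\<nexists>E. nontrivial_idempotent X Y E)"
  using decomposable_if_nontrivial_idempotent nontrivial_idempotent_if_decomposable by metis

section \<open>Module isomorphisms and the block form\<close>

lemma intertwine_inverse:
  fixes P Q :: "'a::semiring_1^'n^'n"
  assumes "P ** Q = mat 1" "Q ** P = mat 1" "P ** X = X' ** P"
  shows "Q ** X' = X ** Q"
proof -
  have "Q ** X' = Q ** X' ** (P ** Q)" by (simp add: assms(1))
  also have "\<dots> = Q ** (P ** X) ** Q" by (simp add: assms(3) matrix_mul_assoc)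
  also have "\<dots> = X ** Q" by (simp add: assms(2) matrix_mul_assoc)
  finally show ?thesis .
qed

lemma intertwine_mult:
  fixes P Q :: "'a::semiring_1^'n^'n"
  assumes "P ** X = X' ** P" "Q ** X' = X'' ** Q"
  shows "(Q ** P) ** X = X'' ** (Q ** P)"
proof -
  have "(Q ** P) ** X = (Q ** X') ** P" by (simp only: assms(1) flip: matrix_mul_assoc)
  also have "\<dots> = X'' ** (Q ** P)" by (simp only: assms(2) matrix_mul_assoc)
  finally show ?thesis .
qed

lemma mod_iso_sym:
  assumes "mod_iso M N"
  shows "mod_iso N M"
proof -
  obtain P Q where "P ** Q = mat 1" "Q ** P = mat 1" "P ** fst M = fst N ** P" "P ** snd M = snd N ** P"
    using assms unfolding mod_iso_def invertible_def by blast
  then show ?thesis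
    unfolding mod_iso_def invertible_def using intertwine_inverse by blast
qed

lemma mod_iso_trans:
  assumes "mod_iso L M" "mod_iso M N"
  shows "mod_iso L N"
proof -
  obtain P where "invertible P" "P ** fst L = fst M ** P" "P ** snd L = snd M ** P"
    using assms(1) unfolding mod_iso_def by blast
  moreover obtain Q where "invertible Q" "Q ** fst M = fst N ** Q" "Q ** snd M = snd N ** Q"
    using assms(2) unfolding mod_iso_def by blast
  ultimately show ?thesis
    unfolding mod_iso_def using invertible_mult intertwine_mult by blast
qed

lemma nontrivial_idempotent_transfer:
  assumes "mod_iso (X, Y) (X', Y')" "nontrivial_idempotent X' Y' E'"
  obtains E where "nontrivial_idempotent X Y E"
proof -
  obtain P Q where P: "P ** Q = mat 1" "Q ** P = mat 1" "P ** X = X' ** P" "P ** Y = Y' ** P"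
    using assms(1) unfolding mod_iso_def invertible_def by auto
  have E': "E' ** E' = E'" "E' \<noteq> 0" "E' \<noteq> mat 1" "E' ** X' = X' ** E'" "E' ** Y' = Y' ** E'"
    using assms(2) unfolding nontrivial_idempotent_def by blast+
  define E where "E = Q ** E' ** P"
  have "P ** E ** Q = (P ** Q) ** E' ** (P ** Q)" by (simp only: E_def matrix_mul_assoc)
  then have E'_eq: "E' = P ** E ** Q" by (simp add: P(1))
  have "E ** E = Q ** (E' ** (P ** Q) ** E') ** P" by (simp only: E_def matrix_mul_assoc)
  then have "E ** E = E" by (simp add: P(1) E'(1) E_def)
  moreover have "E \<noteq> 0" "E \<noteq> mat 1" using E'(2,3) E'_eq P(1) by auto
  moreover have "E ** Z = Z ** E" if "P ** Z = Z' ** P" "E' ** Z' = Z' ** E'" for Z Z'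
  proof -
    have "(Q ** (E' ** P)) ** Z = Z ** (Q ** (E' ** P))"
      using intertwine_mult[OF intertwine_mult[OF that] intertwine_inverse[OF P(1,2) that(1)]] .
    then show ?thesis by (simp only: E_def matrix_mul_assoc)
  qed
  ultimately show thesis using that[of E] P(3,4) E'(4,5) unfolding nontrivial_idempotent_def by blast
qed

lemma mod_iso_lower_block:
  assumes "pencil_equiv A B A' B'"
  shows "mod_iso (lower_block A, lower_block B) (lower_block A', lower_block B')"
proof -
  obtain G H where GH: "invertible G" "invertible H" "G ** A = A' ** H" "G ** B = B' ** H"
    using assms unfolding pencil_equiv_def by blast
  obtain G' H' where "G ** G' = mat 1" "G' ** G = mat 1" "H ** H' = mat 1" "H' ** H = mat 1"
    using GH(1,2) unfolding invertible_def by blast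
  then have "invertible (diag_block H G)" unfolding invertible_def
    by (intro exI[of _ "diag_block H' G'"]) (simp add: diag_block_mult diag_block_one)
  moreover have "diag_block H G ** lower_block A = lower_block A' ** diag_block H G"
    "diag_block H G ** lower_block B = lower_block B' ** diag_block H G"
    by (simp_all add: diag_block_mult_lower_block lower_block_mult_diag_block GH(3,4))
  ultimately show ?thesis unfolding mod_iso_def by auto
qed

lemma nontrivial_idempotent_if_pencil_splits:
  assumes "pencil_splits A B"
  obtains E where "nontrivial_idempotent (lower_block A) (lower_block B) E"
proof -
  obtain H1 H2 where H: "H1 ** H1 = H1" "H2 ** H2 = H2" "H2 ** A = A ** H1" "H2 ** B = B ** H1"
    "\<not> (H1 = 0 \<and> H2 = 0)" "\<not> (H1 = mat 1 \<and> H2 = mat 1)"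
    using assms unfolding pencil_splits_def by blast
  have "nontrivial_idempotent (lower_block A) (lower_block B) (diag_block H1 H2)"
    unfolding nontrivial_idempotent_def
    using H by (simp add: diag_block_mult diag_block_mult_lower_block lower_block_mult_diag_block
        flip: diag_block_zero diag_block_one add: diag_block_eq_iff)
  then show thesis by (rule that)
qed

lemma nontrivial_idempotent_pencil_comb:
  assumes "nontrivial_idempotent (lower_block A) (lower_block B) E"
  shows "nontrivial_idempotent (lower_block (pencil_comb a b A B)) (lower_block (pencil_comb c d A B)) E"
  using assms pencil_comb_intertwine
  unfolding nontrivial_idempotent_def lower_block_pencil_comb by blast

lemma no_nontrivial_idempotent_jordan:
  "\<not> nontrivial_idempotent (lower_block nilpotent_jordan) (lower_block (mat 1)) (E :: 'k::field mat4)"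
proof
  assume "nontrivial_idempotent (lower_block nilpotent_jordan) (lower_block (mat 1)) E"
  then have E: "E ** E = E" "E \<noteq> 0" "E \<noteq> mat 1"
    "E ** lower_block nilpotent_jordan = lower_block nilpotent_jordan ** E"
    "E ** lower_block (mat 1) = lower_block (mat 1) ** E"
    unfolding nontrivial_idempotent_def by blast+
  from E(4,5) have zero: "E$1$3 = 0" "E$1$4 = 0" "E$2$3 = 0" "E$2$4 = 0" "E$2$1 = 0" "E$4$3 = 0"
    "E$2$2 = E$1$1" "E$3$3 = E$1$1" "E$4$4 = E$1$1" "E$3$4 = E$1$2"
    by (simp_all add: block_entries nilpotent_jordan_def mat2_def)
  define a where "a = E$1$1"
  have idem: "(E ** E)$i$j = E$i$j" for i j using E(1) by simp
  have "a * a = a" using idem[of 1 1] zero by (simp add: a_def block_entries)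
  then have a: "a = 0 \<or> a = 1" by (metis mult_cancel_right1 mult_zero_left)
  have vanish: "x = 0" if "x * a + a * x = x" for x
    using a
  proof
    assume "a = 1"
    then have "x + x = x" using that by simp
    then show ?thesis by (metis add_cancel_right_right)
  qed (use that in simp)
  have "E$1$2 = 0" "E$3$1 = 0" "E$3$2 = 0" "E$4$1 = 0" "E$4$2 = 0"
    using idem[of 1 2] idem[of 3 1] idem[of 3 2] idem[of 4 1] idem[of 4 2] zero
    by (auto simp: block_entries a_def intro!: vanish)
  then have "E = mat a" using zero by (simp add: vec_eq_iff forall_4 mat_def a_def)
  then show False using a E(2,3) by auto
qed

lemma matrix_vector_mult_axis: "M *v axis j 1 = column j (M :: 'a::semiring_1^'n^'m)"
  by (simp add: vec_eq_iff matrix_vector_mult_def axis_def column_def if_distrib if_distribR sum.delta'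
      cong: if_cong)

lemma span_pair_elem:
  assumes "v \<in> vec.span {f1, f2 :: 'k::field^'n}"
  obtains a b where "v = a *s f1 + b *s f2"
proof -
  from assms obtain a where "v - a *s f1 \<in> vec.span {f2}" unfolding vec.span_insert by blast
  then obtain b where "v - a *s f1 = b *s f2" unfolding vec.span_singleton by blast
  then show thesis using that[of a b] by (simp add: algebra_simps)
qed

lemma basis_matrix_last_columns:
  fixes N :: "('k::field^4) set"
  assumes "vec.dim N = 2"
  obtains Q :: "'k mat4" where "invertible Q" "Q *v axis 3 1 \<in> N" "Q *v axis 4 1 \<in> N"
    "N \<subseteq> vec.span {Q *v axis 3 1, Q *v axis 4 1}"
proof -
  obtain B where B: "B \<subseteq> N" "vec.independent B" "N \<subseteq> vec.span B" "card B = 2"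
    using vec.basis_exists[of N] assms by metis
  obtain f1 f2 where f: "B = {f1, f2}" using B(4) card_2_iff by metis
  define C where "C = vec.extend_basis B"
  have C: "B \<subseteq> C" "vec.independent C" "vec.span C = UNIV"
    unfolding C_def using vec.extend_basis_superset vec.independent_extend_basis B(2) by auto
  have "card C = 4"
    using vec.basis_card_eq_dim[of C UNIV] C vec_dim_card[where 'a='k and 'n=4] by simp
  then have "card (C - B) = 2"
    using C(1) B(4) by (simp add: card_Diff_subset finite_subset[OF C(1)] card_ge_0_finite)
  then obtain b1 b2 where b: "C - B = {b1, b2}" using card_2_iff by metis
  define col where "col j = (if j = (1::4) then b1 else if j = 2 then b2 else if j = 3 then f1 else f2)" for j
  define Q :: "'k mat4" where "Q = (\<chi> i j. col j $ i)"
  have Q: "Q *v axis j 1 = col j" for j by (simp add: matrix_vector_mult_axis Q_def column_def vec_eq_iff)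
  have "columns Q = C"
  proof -
    have "columns Q = range col" by (auto simp: columns_def column_def Q_def vec_eq_iff)
    also have "\<dots> = {b1, b2, f1, f2}"
    proof
      show "range col \<subseteq> {b1, b2, f1, f2}" by (rule image_subsetI) (simp add: col_def)
      have "b1 = col 1" "b2 = col 2" "f1 = col 3" "f2 = col 4" by (simp_all add: col_def)
      then show "{b1, b2, f1, f2} \<subseteq> range col" by (metis empty_subsetI insert_subset rangeI)
    qed
    also have "\<dots> = C" using b f C(1) by blast
    finally show ?thesis .
  qed
  then have "invertible Q"
    using C(3) by (simp add: invertible_right_inverse matrix_right_invertible_span_columns)
  then show thesis
    using that B(1,3) f by (simp add: Q col_def)
qed

lemma conj_eq_lower_block:
  fixes M Q Q' :: "'k::field mat4"
  assumes QQ': "Q' ** Q = mat 1" and into: "\<And>u. M *v u \<in> N" and kills: "\<And>v. v \<in> N \<Longrightarrow> M *v v = 0"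
    and Q3: "Q *v axis 3 1 \<in> N" and Q4: "Q *v axis 4 1 \<in> N"
    and span: "N \<subseteq> vec.span {Q *v axis 3 1, Q *v axis 4 1}"
  obtains A where "Q' ** M ** Q = lower_block A"
proof -
  let ?M = "Q' ** M ** Q"
  have col: "?M *v axis j 1 = Q' *v (M *v (Q *v axis j 1))" for j
    by (simp add: matrix_vector_mul_assoc matrix_mul_assoc)
  have upper: "?M $ i $ j = 0" if "\<not> is_lower i" for i j
  proof -
    obtain a b where "M *v (Q *v axis j 1) = a *s (Q *v axis 3 1) + b *s (Q *v axis 4 1)"
      using span into by (meson span_pair_elem subsetD)
    then have "?M *v axis j 1 = Q' *v (Q *v (a *s axis 3 1 + b *s axis 4 1))"
      using col by (simp add: matrix_vector_right_distrib vec.scale)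
    also have "\<dots> = a *s axis 3 1 + b *s axis 4 1" by (simp add: matrix_vector_mul_assoc QQ')
    finally have "column j ?M = a *s axis 3 1 + b *s axis 4 1" by (simp only: matrix_vector_mult_axis)
    then show ?thesis
      using that by (simp add: column_def vec_eq_iff axis_def is_lower_def)
  qed
  have right: "?M $ i $ j = 0" if "is_lower j" for i j
  proof -
    have "M *v (Q *v axis j 1) = 0" using that Q3 Q4 kills by (auto simp: is_lower_def)
    then have "?M *v axis j 1 = 0" using col[of j] by simp
    then show ?thesis by (simp add: matrix_vector_mult_axis column_def vec_eq_iff)
  qed
  have "?M = lower_block (mat2 (?M$3$1) (?M$3$2) (?M$4$1) (?M$4$2))"
    using upper right by (simp add: vec_eq_iff forall_4 lower_block_def)
  then show thesis by (rule that)
qed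

lemma mod_iso_lower_block_if_mM_iso_kk:
  fixes X Y :: "'k::field mat4"
  assumes "mM_iso_kk X Y"
  obtains A B where "mod_iso (X, Y) (lower_block A, lower_block B)"
proof -
  let ?N = "mM X Y"
  have dim: "vec.dim ?N = 2" and kills: "\<And>v. v \<in> ?N \<Longrightarrow> X *v v = 0 \<and> Y *v v = 0"
    using assms unfolding mM_iso_kk_def by auto
  obtain Q :: "'k mat4" where Q: "invertible Q" "Q *v axis 3 1 \<in> ?N" "Q *v axis 4 1 \<in> ?N"
    "?N \<subseteq> vec.span {Q *v axis 3 1, Q *v axis 4 1}"
    by (rule basis_matrix_last_columns[OF dim])
  obtain Q' where QQ': "Q ** Q' = mat 1" "Q' ** Q = mat 1" using Q(1) unfolding invertible_def by blast
  have into: "X *v u \<in> ?N" "Y *v u \<in> ?N" for u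
  proof -
    have "X *v u = X *v u + Y *v 0" "Y *v u = X *v 0 + Y *v u" by simp_all
    then show "X *v u \<in> ?N" "Y *v u \<in> ?N" unfolding mM_def by blast+
  qed
  obtain A where A: "Q' ** X ** Q = lower_block A"
    by (rule conj_eq_lower_block[OF QQ'(2) into(1) _ Q(2-4)]) (use kills in blast)
  obtain B where B: "Q' ** Y ** Q = lower_block B"
    by (rule conj_eq_lower_block[OF QQ'(2) into(2) _ Q(2-4)]) (use kills in blast)
  have "Q' ** X = (Q' ** X ** Q) ** Q'" "Q' ** Y = (Q' ** Y ** Q) ** Q'"
    by (simp_all add: QQ'(1) flip: matrix_mul_assoc)
  then have "Q' ** X = lower_block A ** Q'" "Q' ** Y = lower_block B ** Q'" by (simp_all only: A B)
  moreover have "invertible Q'" using QQ' unfolding invertible_def by blast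
  ultimately show thesis using that[of A B] unfolding mod_iso_def by auto
qed

section \<open>The family\<close>

lemma two_neq_zero_if_CHAR_0:
  assumes "CHAR('k::field) = 0"
  shows "(2::'k) \<noteq> 0"
  using CHAR_eq0_iff[THEN iffD1, OF assms, rule_format, of 2] by simp

lemma exists_unimodular_completion:
  fixes s t :: "'k::field"
  assumes "(s, t) \<noteq> (0, 0)"
  obtains p r where "s * r - t * p = 1"
proof (cases "s = 0")
  case True
  then show thesis using assms by (intro that[of 0 "-1 / t"]) simp
next
  case False
  then show thesis by (intro that[of "1 / s" 0]) simp
qed

lemma proportional_if_cross_eq:
  fixes s t s' t' :: "'k::field"
  assumes "(s, t) \<noteq> (0, 0)" "(s', t') \<noteq> (0, 0)" "s * t' = t * s'"
  obtains c where "c \<noteq> 0" "s' = c * s" "t' = c * t"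
proof (cases "s = 0")
  case False
  then show thesis using assms by (intro that[of "s' / s"]) (auto simp: field_simps)
next
  case True
  then show thesis using assms by (intro that[of "t' / t"]) auto
qed

definition image_in_line :: "'a::field^'n^'m \<Rightarrow> bool" where
  "image_in_line M \<longleftrightarrow> (\<exists>g. \<forall>u. \<exists>a. M *v u = a *s g)"

lemma image_in_line_conj:
  fixes M M' P :: "'a::field^'n^'n"
  assumes "invertible P" "P ** M = M' ** P" "image_in_line M"
  shows "image_in_line M'"
proof -
  obtain Q where Q: "P ** Q = mat 1" "Q ** P = mat 1" using assms(1) unfolding invertible_def by blast
  obtain g where g: "\<And>u. \<exists>a. M *v u = a *s g" using assms(3) unfolding image_in_line_def by blast
  have "M' = P ** (Q ** M')" by (simp add: matrix_mul_assoc Q(1))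
  also have "\<dots> = P ** M ** Q" by (simp add: intertwine_inverse[OF Q assms(2)] matrix_mul_assoc)
  finally have "M' = P ** M ** Q" .
  then have "\<exists>a. M' *v u = a *s (P *v g)" for u
    using g[of "Q *v u"] by (auto simp: matrix_vector_mul_assoc[symmetric] vec.scale)
  then show ?thesis unfolding image_in_line_def by blast
qed

lemma det_eq_0_iff_image_in_line: "det Z = 0 \<longleftrightarrow> image_in_line (lower_block (Z :: 'k::field^2^2))"
proof
  assume "det Z = 0"
  then obtain x1 x2 y1 y2 where Z: "Z = mat2 (x1 * y1) (x1 * y2) (x2 * y1) (x2 * y2)"
    by (rule rank_one_factorization)
  have "lower_block Z *v u = (y1 * u$1 + y2 * u$2) *s (\<chi> i. if i = 3 then x1 else if i = 4 then x2 else 0)"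
    for u by (simp add: Z lower_block_mult_vector vec_eq_iff forall_4 algebra_simps)
  then show "image_in_line (lower_block Z)" unfolding image_in_line_def by blast
next
  assume "image_in_line (lower_block Z)"
  then obtain g where g: "\<And>u. \<exists>a. lower_block Z *v u = a *s g" unfolding image_in_line_def by blast
  obtain a b where "lower_block Z *v axis 1 1 = a *s g" "lower_block Z *v axis 2 1 = b *s g"
    using g by blast
  then have "Z$1$1 = a * g$3" "Z$2$1 = a * g$4" "Z$1$2 = b * g$3" "Z$2$2 = b * g$4"
    by (simp_all add: matrix_vector_mult_axis column_def lower_block_def vec_eq_iff forall_4)
  then show "det Z = 0" by (simp add: det_2)
qed

text \<open>The only singular members of this pencil are the multiples of s family_x s t + t family_y s t,
  which is how the module remembers (s : t).\<close>

definition family_x :: "'a::comm_ring_1 \<Rightarrow> 'a \<Rightarrow> 'a^2^2" where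
  "family_x s t = mat2 s (2 * t) (- t) 0"

definition family_y :: "'a::comm_ring_1 \<Rightarrow> 'a \<Rightarrow> 'a^2^2" where
  "family_y s t = mat2 0 (- s) (2 * s) t"

lemma det_family_pencil: "det (pencil_comb a b (family_x s t) (family_y s t)) = 2 * (a * t - b * s)^2"
  by (simp add: family_x_def family_y_def algebra_simps power2_eq_square)

lemma family_singular_member: "pencil_comb s t (family_x s t) (family_y s t) = mat2 (s * s) (s * t) (s * t) (t * t)"
  by (simp add: family_x_def family_y_def algebra_simps)

lemma family_normal_form:
  fixes s t p r :: "'k::field"
  assumes "CHAR('k) = 0" "s * r - t * p = 1"
  shows "pencil_equiv (pencil_comb s t (family_x s t) (family_y s t))
    (pencil_comb p r (family_x s t) (family_y s t)) nilpotent_jordan (mat 1)"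
proof (rule pencil_equiv_nilpotent_jordan)
  have "p * t - r * s = - 1" using assms(2) by (simp add: algebra_simps)
  then show "det (pencil_comb p r (family_x s t) (family_y s t)) \<noteq> 0"
    using two_neq_zero_if_CHAR_0[OF assms(1)] by (simp add: det_family_pencil)
  show "det (pencil_comb s t (family_x s t) (family_y s t)) = 0"
    by (simp add: det_family_pencil)
  show "det_polar (pencil_comb p r (family_x s t) (family_y s t)) (pencil_comb s t (family_x s t) (family_y s t)) = 0"
    by (simp add: family_x_def family_y_def algebra_simps)
  show "pencil_comb s t (family_x s t) (family_y s t) \<noteq> 0"
    using assms(2) by (auto simp: family_singular_member mat2_zero)
qed

lemma family_indecomposable:
  fixes s t :: "'k::field"
  assumes "CHAR('k) = 0" "(s, t) \<noteq> (0, 0)"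
  shows "indecomposable (lower_block (family_x s t)) (lower_block (family_y s t))"
  unfolding indecomposable_iff_no_nontrivial_idempotent
proof
  let ?X = "family_x s t" and ?Y = "family_y s t"
  assume "\<exists>E. nontrivial_idempotent (lower_block ?X) (lower_block ?Y) E"
  then obtain E where E: "nontrivial_idempotent (lower_block ?X) (lower_block ?Y) E" ..
  obtain p r where pr: "s * r - t * p = 1" using exists_unimodular_completion[OF assms(2)] .
  have iso: "mod_iso (lower_block nilpotent_jordan, lower_block (mat 1))
      (lower_block (pencil_comb s t ?X ?Y), lower_block (pencil_comb p r ?X ?Y))"
    by (rule mod_iso_sym[OF mod_iso_lower_block[OF family_normal_form[OF assms(1) pr]]])
  obtain E' :: "'k mat4" where "nontrivial_idempotent (lower_block nilpotent_jordan) (lower_block (mat 1)) E'"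
    using nontrivial_idempotent_transfer[OF iso nontrivial_idempotent_pencil_comb[OF E]] .
  then show False using no_nontrivial_idempotent_jordan by blast
qed

lemma dim_lower_half: "vec.dim {v :: 'k::field^4. v$1 = 0 \<and> v$2 = 0} = 2"
proof (rule vec.dim_unique[of "{axis 3 1, axis 4 1}"])
  show "{axis 3 1, axis 4 1} \<subseteq> {v :: 'k^4. v$1 = 0 \<and> v$2 = 0}" by (simp add: axis_def)
  show "{v :: 'k^4. v$1 = 0 \<and> v$2 = 0} \<subseteq> vec.span {axis 3 1, axis 4 1}"
  proof
    fix v :: "'k^4" assume "v \<in> {v. v$1 = 0 \<and> v$2 = 0}"
    then have "v = v$3 *s axis 3 1 + v$4 *s axis 4 1" by (simp add: vec_eq_iff forall_4 axis_def)
    also have "\<dots> \<in> vec.span {axis 3 1, axis 4 1}"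
      by (intro vec.span_add vec.span_scale vec.span_base) auto
    finally show "v \<in> vec.span {axis 3 1, axis 4 1}" .
  qed
  show "vec.independent {axis 3 1, axis 4 1 :: 'k^4}"
    by (rule vec.independent_mono[OF independent_cart_basis]) (auto simp: cart_basis_def)
  show "card {axis 3 1, axis 4 1 :: 'k^4} = 2" by (simp add: axis_eq_axis)
qed

lemma mM_family:
  fixes s t :: "'k::field"
  assumes "CHAR('k) = 0" "(s, t) \<noteq> (0, 0)"
  shows "mM (lower_block (family_x s t)) (lower_block (family_y s t)) = {v. v$1 = 0 \<and> v$2 = 0}"
proof
  show "mM (lower_block (family_x s t)) (lower_block (family_y s t)) \<subseteq> {v. v$1 = 0 \<and> v$2 = 0}"
    by (auto simp: mM_def lower_block_mult_vector)
  have two: "(2::'k) \<noteq> 0" using two_neq_zero_if_CHAR_0[OF assms(1)] .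
  show "{v. v$1 = 0 \<and> v$2 = 0} \<subseteq> mM (lower_block (family_x s t)) (lower_block (family_y s t))"
  proof
    fix v :: "'k^4" assume v: "v \<in> {v. v$1 = 0 \<and> v$2 = 0}"
    obtain u u' where "lower_block (family_x s t) *v u + lower_block (family_y s t) *v u' = v"
    proof (cases "s = 0")
      case False
      show thesis
        by (rule that[of "axis 1 (v$3 / s)" "axis 1 ((v$4 + t * v$3 / s) / (2 * s))"])
           (use v False two in \<open>simp add: lower_block_mult_vector vec_eq_iff forall_4 axis_def
              family_x_def family_y_def field_simps\<close>)
    next
      case True
      with assms(2) have "t \<noteq> 0" by simp
      show thesis
        by (rule that[of "axis 2 ((v$3 + s * v$4 / t) / (2 * t))" "axis 2 (v$4 / t)"])
           (use v \<open>t \<noteq> 0\<close> two in \<open>simp add: lower_block_mult_vector vec_eq_iff forall_4 axis_def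
              family_x_def family_y_def field_simps\<close>)
    qed
    then show "v \<in> mM (lower_block (family_x s t)) (lower_block (family_y s t))"
      unfolding mM_def by blast
  qed
qed

lemma family_in_F2:
  fixes s t :: "'k::field"
  assumes "CHAR('k) = 0" "(s, t) \<noteq> (0, 0)"
  shows "in_F2 (lower_block (family_x s t)) (lower_block (family_y s t))"
  unfolding in_F2_def
proof (intro conjI)
  let ?X = "lower_block (family_x s t)" and ?Y = "lower_block (family_y s t)"
  show "is_Amodule ?X ?Y" by (simp add: is_Amodule_def)
  have "mpow ?X i ** mpow ?Y (2 - i) = 0" if "i \<le> 2" for i
  proof -
    have "i = 0 \<or> i = 1 \<or> i = 2" using that by auto
    then show ?thesis by (auto simp: mpow_def numeral_2_eq_2)
  qed
  then show "supported_at_m ?X ?Y" unfolding supported_at_m_def by blast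
  show "indecomposable ?X ?Y" by (rule family_indecomposable[OF assms])
  have "?X *v v = 0 \<and> ?Y *v v = 0" if "v \<in> mM ?X ?Y" for v
    using that by (auto simp: mM_def matrix_vector_right_distrib matrix_vector_mul_assoc)
  then show "mM_iso_kk ?X ?Y" unfolding mM_iso_kk_def mM_family[OF assms] dim_lower_half by simp
qed

lemma mod_iso_family_iff:
  fixes s t s' t' :: "'k::field"
  assumes "CHAR('k) = 0" "(s, t) \<noteq> (0, 0)" "(s', t') \<noteq> (0, 0)"
  shows "mod_iso (lower_block (family_x s t), lower_block (family_y s t))
      (lower_block (family_x s' t'), lower_block (family_y s' t'))
    \<longleftrightarrow> (\<exists>c. c \<noteq> 0 \<and> s' = c * s \<and> t' = c * t)"
proof
  assume "\<exists>c. c \<noteq> 0 \<and> s' = c * s \<and> t' = c * t"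
  then obtain c where c: "c \<noteq> 0" "s' = c * s" "t' = c * t" by blast
  have "invertible (mat c :: 'k^2^2)" "invertible (mat 1 :: 'k^2^2)"
    using c(1) by (simp_all add: invertible_det_nz det_2 mat_def)
  moreover have "mat c ** family_x s t = family_x s' t' ** mat 1"
    "mat c ** family_y s t = family_y s' t' ** mat 1"
    by (simp_all add: c family_x_def family_y_def vec_eq_iff forall_2 algebra_simps)
  ultimately show "mod_iso (lower_block (family_x s t), lower_block (family_y s t))
      (lower_block (family_x s' t'), lower_block (family_y s' t'))"
    by (intro mod_iso_lower_block pencil_equivI)
next
  assume "mod_iso (lower_block (family_x s t), lower_block (family_y s t))
      (lower_block (family_x s' t'), lower_block (family_y s' t'))"
  then obtain P where P: "invertible P" "P ** lower_block (family_x s t) = lower_block (family_x s' t') ** P"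
    "P ** lower_block (family_y s t) = lower_block (family_y s' t') ** P"
    unfolding mod_iso_def by auto
  have "image_in_line (lower_block (pencil_comb s t (family_x s t) (family_y s t)))"
    by (simp add: det_family_pencil flip: det_eq_0_iff_image_in_line)
  then have "image_in_line (lower_block (pencil_comb s t (family_x s' t') (family_y s' t')))"
    using image_in_line_conj[OF P(1) pencil_comb_intertwine[OF P(2,3)]]
    by (simp add: lower_block_pencil_comb)
  then have "2 * (s * t' - t * s')^2 = 0"
    by (simp add: det_family_pencil flip: det_eq_0_iff_image_in_line)
  then have "s * t' = t * s'" using two_neq_zero_if_CHAR_0[OF assms(1)] by simp
  then obtain c where "c \<noteq> 0" "s' = c * s" "t' = c * t"
    by (rule proportional_if_cross_eq[OF assms(2,3)])
  then show "\<exists>c. c \<noteq> 0 \<and> s' = c * s \<and> t' = c * t" by blast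
qed

lemma in_F2_iso_family:
  fixes X Y :: "'k::alg_closed_field mat4"
  assumes "CHAR('k) = 0" "in_F2 X Y"
  shows "\<exists>s t. (s, t) \<noteq> (0, 0) \<and> mod_iso (X, Y) (lower_block (family_x s t), lower_block (family_y s t))"
proof -
  have kk: "mM_iso_kk X Y" and indec: "indecomposable X Y" using assms(2) unfolding in_F2_def by auto
  from kk obtain A B where AB: "mod_iso (X, Y) (lower_block A, lower_block B)"
    by (rule mod_iso_lower_block_if_mM_iso_kk)
  have "\<not> pencil_splits A B"
  proof
    assume "pencil_splits A B"
    then obtain E where "nontrivial_idempotent (lower_block A) (lower_block B) E"
      by (rule nontrivial_idempotent_if_pencil_splits)
    then obtain E' where "nontrivial_idempotent X Y E'"
      by (rule nontrivial_idempotent_transfer[OF AB])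
    then show False using indec decomposable_if_nontrivial_idempotent by blast
  qed
  then obtain s t p r where st: "s * r - t * p = 1"
    and equiv: "pencil_equiv (pencil_comb s t A B) (pencil_comb p r A B) nilpotent_jordan (mat 1)"
    by (rule pencil_normal_form)
  \<comment> \<open>the family member at the root (s : t) has the same normal form in the same basis (s t; p r)\<close>
  let ?J = "pencil_comb r (-t) nilpotent_jordan (mat 1)" and ?K = "pencil_comb (-p) s nilpotent_jordan (mat 1)"
  have "mod_iso (lower_block A, lower_block B) (lower_block ?J, lower_block ?K)"
    by (rule mod_iso_lower_block[OF pencil_equiv_change_basis[OF st equiv]])
  moreover have "mod_iso (lower_block (family_x s t), lower_block (family_y s t)) (lower_block ?J, lower_block ?K)"
    by (rule mod_iso_lower_block[OF pencil_equiv_change_basis[OF st family_normal_form[OF assms(1) st]]])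
  ultimately have "mod_iso (X, Y) (lower_block (family_x s t), lower_block (family_y s t))"
    using mod_iso_trans[OF AB] mod_iso_trans mod_iso_sym by blast
  moreover have "(s, t) \<noteq> (0, 0)" using st by auto
  ultimately show ?thesis by blast
qed

text \<open>poly2 p s t evaluates the outer variable at t and the inner one at s.\<close>

definition poly2_var_s :: "'a::comm_ring_1 poly poly" where
  "poly2_var_s = [:[:0, 1:]:]"

definition poly2_var_t :: "'a::comm_ring_1 poly poly" where
  "poly2_var_t = [:0, 1:]"

lemma poly2_var [simp]: "poly2 poly2_var_s s t = s" "poly2 poly2_var_t s t = t"
  by (simp_all add: poly2_def poly2_var_s_def poly2_var_t_def)

lemma poly2_ring_hom [simp]:
  "poly2 (p + q) s t = poly2 p s t + poly2 q s t" "poly2 (p * q) s t = poly2 p s t * poly2 q s t"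
  "poly2 (- p) s t = - poly2 p s t" "poly2 0 s t = 0" "poly2 2 s t = 2"
  by (simp_all add: poly2_def)

lemma eval_family_lower_block:
  "eval_family (lower_block (family_x poly2_var_s poly2_var_t)) (lower_block (family_y poly2_var_s poly2_var_t)) s t
     = (lower_block (family_x s t), lower_block (family_y (s :: 'k::field) t))"
  by (simp add: eval_family_def vec_eq_iff forall_4 lower_block_def family_x_def family_y_def mat2_def)

theorem proposition5p5:
  assumes "CHAR('k::alg_closed_field) = 0"
  shows "\<exists>PX PY :: 'k poly poly^4^4.
     (\<forall>s t. (s, t) \<noteq> (0, 0) \<longrightarrow> in_F2 (fst (eval_family PX PY s t)) (snd (eval_family PX PY s t)))
   \<and> (\<forall>s t s' t'. (s, t) \<noteq> (0, 0) \<longrightarrow> (s', t') \<noteq> (0, 0) \<longrightarrow>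
        (mod_iso (eval_family PX PY s t) (eval_family PX PY s' t')
           \<longleftrightarrow> (\<exists>c. c \<noteq> 0 \<and> s' = c * s \<and> t' = c * t)))
   \<and> (\<forall>X Y. in_F2 X Y \<longrightarrow> (\<exists>s t. (s, t) \<noteq> (0, 0) \<and> mod_iso (X, Y) (eval_family PX PY s t)))"
proof -
  let ?PX = "lower_block (family_x poly2_var_s poly2_var_t) :: 'k poly poly^4^4"
  let ?PY = "lower_block (family_y poly2_var_s poly2_var_t) :: 'k poly poly^4^4"
  have "\<forall>X Y. in_F2 X Y \<longrightarrow> (\<exists>s t. (s, t) \<noteq> (0, 0) \<and> mod_iso (X, Y) (eval_family ?PX ?PY s t))"
    using in_F2_iso_family[OF assms] by (simp add: eval_family_lower_block)
  then show ?thesis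
    by (intro exI[of _ ?PX] exI[of _ ?PY] conjI)
       (simp_all add: eval_family_lower_block family_in_F2[OF assms] mod_iso_family_iff[OF assms])
qed

end
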